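(* Let $K$ be an algebraically closed field of characteristic zero, let $n\geq 3$ and let $\lambda\in K\setminus\{-1\}$. Then every $D\in sl_n(K)$ can be written as $D=[A,B][A,C]+\lambda[A,C][A,B]$ for suitable matrices $A,B,C\in M_n(K)$.
   Context: $[X,Y]=XY-YX$ denotes the commutator, $M_n(K)$ is the algebra of $n\times n$ matrices over $K$, and $sl_n(K)$ is the set of trace zero matrices in $M_n(K)$. *)

theory Defs
  imports "Jordan_Normal_Form.Matrix" "HOL-Computational_Algebra.Polynomial"
begin

definition mat_trace :: "'a::comm_ring_1 mat \<Rightarrow> 'a" where
  "mat_trace A = (\<Sum>i<dim_row A. A $$ (i, i))"

definition commutator :: "'a::comm_ring_1 mat \<Rightarrow> 'a mat \<Rightarrow> 'a mat" where
  "commutator X Y = X * Y - Y * X"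

end

theory Submission
  imports Defs "Jordan_Normal_Form.Schur_Decomposition" "Jordan_Normal_Form.DL_Rank"
begin

text \<open>Triangularize \<open>D = P U Q\<close>. It suffices to write the trace-zero upper triangular \<open>U\<close> as
  \<open>X Y + \<lambda> Y X\<close> with trace-zero upper triangular \<open>X\<close>, \<open>Y\<close>: each of these is a commutator
  \<open>[N, B]\<close> with the nilpotent shift \<open>N\<close>, and conjugating back gives \<open>A = P N Q\<close>. The entries of
  \<open>X\<close> and \<open>Y\<close> above the diagonal can be solved for diagonal by diagonal, provided that
  \<open>x\<^sub>i + \<lambda> x\<^sub>j\<close> or \<open>y\<^sub>j + \<lambda> y\<^sub>i\<close> is nonzero for \<open>i < j\<close>, where \<open>x\<close>, \<open>y\<close> are the
  diagonals. These must satisfy \<open>(1 + \<lambda>) x\<^sub>i y\<^sub>i = U\<^sub>i\<^sub>i\<close> and \<open>\<Sum> x = \<Sum> y = 0\<close>. If some \<open>U\<^sub>i\<^sub>i = 0\<close>,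
  take \<open>y\<^sub>i = U\<^sub>i\<^sub>i / (1 + \<lambda>)\<close> and \<open>x = (1, \<dots>, 1 - n, \<dots>, 1)\<close> with the exceptional entry placed
  suitably among the zeros. Otherwise take \<open>y\<^sub>i = U\<^sub>i\<^sub>i / ((1 + \<lambda>) x\<^sub>i)\<close> with \<open>x\<close> piecewise constant
  with two free values, and \<open>\<Sum> y = 0\<close> becomes a quadratic equation, solvable in \<open>K\<close>.\<close>

section \<open>Traces and conjugation\<close>

lemma index_mult_mat_sum:
  assumes "A \<in> carrier_mat n m" "B \<in> carrier_mat m k" "i < n" "j < k"
  shows "(A * B) $$ (i, j) = (\<Sum>t<m. A $$ (i, t) * B $$ (t, j))"
  using assms by (auto simp: scalar_prod_def atLeast0LessThan intro!: sum.cong)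

lemma mat_trace_mult_comm:
  fixes A :: "'a::comm_ring_1 mat"
  assumes A: "A \<in> carrier_mat n m" and B: "B \<in> carrier_mat m n"
  shows "mat_trace (A * B) = mat_trace (B * A)"
proof -
  have "mat_trace (A * B) = (\<Sum>i<n. \<Sum>k<m. A $$ (i, k) * B $$ (k, i))"
    unfolding mat_trace_def using A B
    by (auto simp del: index_mult_mat(1) simp: index_mult_mat_sum[OF A B] intro!: sum.cong)
  also have "\<dots> = (\<Sum>k<m. \<Sum>i<n. B $$ (k, i) * A $$ (i, k))"
    by (subst sum.swap) (simp add: mult.commute)
  also have "\<dots> = mat_trace (B * A)"
    unfolding mat_trace_def using A B
    by (auto simp del: index_mult_mat(1) simp: index_mult_mat_sum[OF B A] intro!: sum.cong)
  finally show ?thesis .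
qed

lemma similar_mat_wit_mat_trace:
  fixes A :: "'a::comm_ring_1 mat"
  assumes A: "A \<in> carrier_mat n n" and sim: "similar_mat_wit A B P Q"
  shows "mat_trace A = mat_trace B"
proof -
  from similar_mat_witD2[OF A sim] have QP: "Q * P = 1\<^sub>m n" and AB: "A = P * B * Q"
    and B: "B \<in> carrier_mat n n" and P: "P \<in> carrier_mat n n" and Q: "Q \<in> carrier_mat n n"
    by auto
  have "mat_trace A = mat_trace (Q * (P * B))"
    unfolding AB using P B Q by (intro mat_trace_mult_comm) auto
  also have "Q * (P * B) = B"
    using P B Q by (simp add: assoc_mult_mat[of _ n n _ n _ n, symmetric] QP)
  finally show ?thesis .
qed

lemma commutator_carrier:
  "X \<in> carrier_mat n n \<Longrightarrow> Y \<in> carrier_mat n n \<Longrightarrow> commutator X Y \<in> carrier_mat n n"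
  unfolding commutator_def by (intro minus_carrier_mat mult_carrier_mat)

definition twisted_prod :: "'a::comm_ring_1 \<Rightarrow> 'a mat \<Rightarrow> 'a mat \<Rightarrow> 'a mat" where
  "twisted_prod l X Y = X * Y + l \<cdot>\<^sub>m (Y * X)"

context
  fixes P Q :: "'a::comm_ring_1 mat" and n :: nat
  assumes P: "P \<in> carrier_mat n n" and Q: "Q \<in> carrier_mat n n" and QP: "Q * P = 1\<^sub>m n"
begin

lemma mult_conj_mat:
  assumes M: "M \<in> carrier_mat n n" and M': "M' \<in> carrier_mat n n"
  shows "(P * M * Q) * (P * M' * Q) = P * (M * M') * Q"
proof -
  have cancel: "Q * (P * X) = X" if "X \<in> carrier_mat n n" for X
    using that P Q by (simp add: assoc_mult_mat[of _ n n _ n _ n, symmetric] QP)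
  show ?thesis
    using P Q M M' by (simp add: assoc_mult_mat[of _ n n _ n _ n] cancel)
qed

lemma commutator_conj:
  assumes M: "M \<in> carrier_mat n n" and M': "M' \<in> carrier_mat n n"
  shows "commutator (P * M * Q) (P * M' * Q) = P * commutator M M' * Q"
proof -
  have "P * commutator M M' = P * (M * M') - P * (M' * M)"
    unfolding commutator_def using P M M' by (intro mult_minus_distrib_mat) auto
  then have "P * commutator M M' * Q = P * (M * M') * Q - P * (M' * M) * Q"
    using P Q M M' by (simp add: minus_mult_distrib_mat[of _ n n])
  then show ?thesis
    unfolding commutator_def mult_conj_mat[OF M M'] mult_conj_mat[OF M' M] by simp
qed

lemma twisted_prod_conj:
  assumes X: "X \<in> carrier_mat n n" and Y: "Y \<in> carrier_mat n n"
  shows "twisted_prod l (P * X * Q) (P * Y * Q) = P * twisted_prod l X Y * Q"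
proof -
  have XY: "X * Y \<in> carrier_mat n n" and YX: "Y * X \<in> carrier_mat n n"
    using X Y by auto
  have "P * twisted_prod l X Y * Q = (P * (X * Y) + l \<cdot>\<^sub>m (P * (Y * X))) * Q"
    unfolding twisted_prod_def mult_add_distrib_mat[OF P XY smult_carrier_mat[OF YX]]
      mult_smult_distrib[OF P YX] ..
  also have "\<dots> = P * (X * Y) * Q + l \<cdot>\<^sub>m (P * (Y * X) * Q)"
    using add_mult_distrib_mat[OF mult_carrier_mat[OF P XY]
        smult_carrier_mat[OF mult_carrier_mat[OF P YX]] Q]
      mult_smult_assoc_mat[OF mult_carrier_mat[OF P YX] Q]
    by simp
  finally show ?thesis
    unfolding twisted_prod_def mult_conj_mat[OF X Y] mult_conj_mat[OF Y X] by simp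
qed

end

section \<open>Triangularization over algebraically closed fields\<close>

lemma invertible_mat_of_cols:
  fixes b :: "'a::field vec list"
  assumes b: "set b \<subseteq> carrier_vec n" and len: "length b = n" and dist: "distinct b"
    and indep: "\<not> module.lin_dep class_ring (module_vec TYPE('a) n) (set b)"
  shows "\<exists>W'. W' \<in> carrier_mat n n \<and> W' * mat_of_cols n b = 1\<^sub>m n \<and> mat_of_cols n b * W' = 1\<^sub>m n"
proof -
  interpret V: vec_space "TYPE('a)" n .
  let ?W = "mat_of_cols n b"
  have W: "?W \<in> carrier_mat n n"
    using len by auto
  have "det ?W \<noteq> 0"
    using V.det_rank_iff[OF W] V.lin_indpt_full_rank[OF W] b dist indep by simp
  then have "?W \<in> Units (ring_mat TYPE('a) n ())"
    by (rule det_non_zero_imp_unit[OF W])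
  then show ?thesis
    unfolding Units_def ring_mat_def by auto
qed

lemma invertible_mat_with_first_col:
  fixes v :: "'a::field vec"
  assumes v: "v \<in> carrier_vec n" and v0: "v \<noteq> 0\<^sub>v n"
  shows "\<exists>W W'. W \<in> carrier_mat n n \<and> W' \<in> carrier_mat n n \<and> W' * W = 1\<^sub>m n \<and> W * W' = 1\<^sub>m n \<and>
    col W 0 = v"
proof -
  interpret V: vec_space "TYPE('a)" n .
  define b where "b = basis_completion v"
  from V.basis_completion[OF v v0, folded b_def]
  have dist: "distinct b" and indep: "\<not> V.lin_dep (set b)" and b: "set b \<subseteq> carrier_vec n"
    and hd: "hd b = v" and len: "length b = n"
    by auto
  have "n \<noteq> 0"
    using v v0 by auto
  then have "b ! 0 = v"
    using hd len by (cases b) auto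
  then have "col (mat_of_cols n b) 0 = v"
    using b len \<open>n \<noteq> 0\<close> by (subst col_mat_of_cols) auto
  moreover have "mat_of_cols n b \<in> carrier_mat n n"
    using len mat_of_cols_carrier(1)[of n b] by simp
  ultimately show ?thesis
    using invertible_mat_of_cols[OF b len dist indep] by blast
qed

lemma similar_mat_wit_eigenvector_first:
  fixes A :: "'a::field mat"
  assumes A: "A \<in> carrier_mat n n" and ev: "eigenvector A v e"
  shows "\<exists>A' W W'. similar_mat_wit A A' W W' \<and> col A' 0 = e \<cdot>\<^sub>v unit_vec n 0"
proof -
  have v: "v \<in> carrier_vec n" and v0: "v \<noteq> 0\<^sub>v n" and Av: "A *\<^sub>v v = e \<cdot>\<^sub>v v"
    using ev A unfolding eigenvector_def by auto
  then have "n \<noteq> 0"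
    by auto
  obtain W W' where W: "W \<in> carrier_mat n n" and W': "W' \<in> carrier_mat n n"
    and W'W: "W' * W = 1\<^sub>m n" and WW': "W * W' = 1\<^sub>m n" and colW: "col W 0 = v"
    using invertible_mat_with_first_col[OF v v0] by blast
  define A' where "A' = W' * A * W"
  have "W * A' * W' = (W * W') * A * (W * W')"
    unfolding A'_def using A W W' by (simp add: assoc_mult_mat[of _ n n _ n _ n])
  then have sim: "similar_mat_wit A A' W W'"
    using A W W' WW' W'W by (intro similar_mat_witI) (auto simp: A'_def)
  have "col A' 0 = (W' * A) *\<^sub>v col W 0"
    unfolding A'_def using W W' A \<open>n \<noteq> 0\<close> by (subst col_mult2) auto
  also have "\<dots> = e \<cdot>\<^sub>v (W' *\<^sub>v col W 0)"
    unfolding colW using W' A v by (simp add: Av mult_mat_vec)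
  also have "W' *\<^sub>v col W 0 = unit_vec n 0"
    using W W' \<open>n \<noteq> 0\<close> by (subst col_mult2[symmetric]) (auto simp: W'W)
  finally show ?thesis
    using sim by blast
qed

lemma similar_mat_wit_block_upper_triangular:
  assumes A1: "A1 \<in> carrier_mat k k" and ut1: "upper_triangular A1"
    and A2: "A2 \<in> carrier_mat k m" and A3: "A3 \<in> carrier_mat m m"
    and sim: "similar_mat_wit A3 B P Q" and ut: "upper_triangular B"
  shows "\<exists>U P' Q'. similar_mat_wit (four_block_mat A1 A2 (0\<^sub>m m k) A3) U P' Q' \<and> upper_triangular U"
proof -
  from similar_mat_witD2[OF A3 sim]
  have B: "B \<in> carrier_mat m m" and P: "P \<in> carrier_mat m m" and Q: "Q \<in> carrier_mat m m"
    and PQ: "P * Q = 1\<^sub>m m"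
    by auto
  have A2_eq: "A2 = 1\<^sub>m k * (A2 * P) * Q"
    using A2 P Q PQ by (simp add: assoc_mult_mat[of _ k m _ m _ m])
  have zero_eq: "0\<^sub>m m k = P * 0\<^sub>m m k * 1\<^sub>m k"
    using P by simp
  have "similar_mat_wit (four_block_mat A1 A2 (0\<^sub>m m k) A3) (four_block_mat A1 (A2 * P) (0\<^sub>m m k) B)
      (four_block_mat (1\<^sub>m k) (0\<^sub>m k m) (0\<^sub>m m k) P) (four_block_mat (1\<^sub>m k) (0\<^sub>m k m) (0\<^sub>m m k) Q)"
    using A2 P
    by (intro similar_mat_wit_four_block[OF similar_mat_wit_refl[OF A1] sim A2_eq zero_eq A1 A3])
      auto
  moreover have "upper_triangular (four_block_mat A1 (A2 * P) (0\<^sub>m m k) B)"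
    by (rule upper_triangular_four_block[OF A1 B ut1 ut])
  ultimately show ?thesis
    by blast
qed

lemma alg_closed_eigenvalue_exists:
  fixes A :: "'a::alg_closed_field mat"
  assumes A: "A \<in> carrier_mat (Suc n) (Suc n)"
  shows "\<exists>e. eigenvalue A e"
proof -
  have "degree (char_poly A) > 0"
    using degree_monic_char_poly[OF A] by simp
  then obtain e where "poly (char_poly A) e = 0"
    using alg_closed_imp_poly_has_root by blast
  then show ?thesis
    using eigenvalue_root_char_poly[OF A] by blast
qed

lemma alg_closed_triangularizable:
  fixes A :: "'a::alg_closed_field mat"
  assumes "A \<in> carrier_mat n n"
  shows "\<exists>U P Q. similar_mat_wit A U P Q \<and> upper_triangular U"
  using assms
proof (induction n arbitrary: A)
  case 0
  then have "similar_mat_wit A A (1\<^sub>m 0) (1\<^sub>m 0) \<and> upper_triangular A"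
    using similar_mat_wit_refl[OF 0] by (auto simp: upper_triangular_def)
  then show ?case
    by blast
next
  case (Suc n A)
  obtain e where "eigenvalue A e"
    using alg_closed_eigenvalue_exists[OF Suc.prems] by blast
  then obtain A' W W' where simA': "similar_mat_wit A A' W W'"
    and col: "col A' 0 = e \<cdot>\<^sub>v unit_vec (Suc n) 0"
    using similar_mat_wit_eigenvector_first[OF Suc.prems find_eigenvector[OF Suc.prems]] by blast
  have A': "A' \<in> carrier_mat (1 + n) (1 + n)"
    using similar_mat_witD2[OF Suc.prems simA'] by simp
  obtain A1 A2 A0 A3 where split: "split_block A' 1 1 = (A1, A2, A0, A3)"
    by (cases "split_block A' 1 1")
  from split_block[OF split] A'
  have A1: "A1 \<in> carrier_mat 1 1" and A2: "A2 \<in> carrier_mat 1 n" and A3: "A3 \<in> carrier_mat n n"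
    and A'_eq: "A' = four_block_mat A1 A2 A0 A3"
    by auto
  have "A' $$ (i, 0) = 0" if "0 < i" "i < Suc n" for i
    using arg_cong[OF col, of "\<lambda>w. w $ i"] that A' by auto
  then have "A0 = 0\<^sub>m n 1"
    using split A' unfolding split_block_def Let_def by auto
  moreover have "upper_triangular A1"
    using A1 by (auto simp: upper_triangular_def)
  moreover obtain B P Q where "similar_mat_wit A3 B P Q" "upper_triangular B"
    using Suc.IH[OF A3] by blast
  ultimately obtain U P' Q' where "similar_mat_wit A' U P' Q'" "upper_triangular U"
    using similar_mat_wit_block_upper_triangular[OF A1 _ A2 A3] A'_eq by metis
  then show ?case
    using similar_mat_wit_trans[OF simA'] by blast
qed

section \<open>Commutators with the shift matrix\<close>

definition shift_mat :: "nat \<Rightarrow> 'a::comm_ring_1 mat" where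
  "shift_mat n = mat n n (\<lambda>(i, j). if j = Suc i then 1 else 0)"

lemma shift_mat_carrier [simp]: "shift_mat n \<in> carrier_mat n n"
  and shift_mat_dim [simp]: "dim_row (shift_mat n) = n" "dim_col (shift_mat n) = n"
  by (simp_all add: shift_mat_def)

lemma shift_mat_mult_index:
  assumes C: "C \<in> carrier_mat n n" and i: "i < n" and j: "j < n"
  shows "(shift_mat n * C) $$ (i, j) = (if Suc i < n then C $$ (Suc i, j) else 0)"
proof -
  have "(shift_mat n * C) $$ (i, j) = (\<Sum>t<n. (if t = Suc i then 1 else 0) * C $$ (t, j))"
    using C i j by (subst index_mult_mat_sum[of _ n n _ n]) (auto simp: shift_mat_def)
  also have "\<dots> = (\<Sum>t<n. if t = Suc i then C $$ (t, j) else 0)"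
    by (intro sum.cong) auto
  finally show ?thesis by (simp add: sum.delta')
qed

lemma mult_shift_mat_index:
  assumes C: "C \<in> carrier_mat n n" and i: "i < n" and j: "j < n"
  shows "(C * shift_mat n) $$ (i, j) = (if j = 0 then 0 else C $$ (i, j - 1))"
proof -
  have "(C * shift_mat n) $$ (i, j) = (\<Sum>t<n. C $$ (i, t) * (if j = Suc t then 1 else 0))"
    using C i j by (subst index_mult_mat_sum[of _ n n _ n]) (auto simp: shift_mat_def)
  also have "\<dots> = (\<Sum>t<n. if t = j - 1 \<and> j \<noteq> 0 then C $$ (i, t) else 0)"
    by (intro sum.cong) auto
  finally show ?thesis using j by (simp add: sum.delta')
qed

text \<open>The sum of the entries of \<open>M\<close> on the diagonal through \<open>(i, j)\<close> above row \<open>i\<close>.\<close>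
definition diag_prefix_sum :: "'a::comm_ring_1 mat \<Rightarrow> nat \<Rightarrow> nat \<Rightarrow> 'a" where
  "diag_prefix_sum M i j = (\<Sum>a<i. \<Sum>b<j. if a + j = b + i then M $$ (a, b) else 0)"

lemma diag_prefix_sum_0 [simp]: "diag_prefix_sum M i 0 = 0"
  by (simp add: diag_prefix_sum_def)

lemma diag_prefix_sum_Suc:
  "diag_prefix_sum M (Suc i) (Suc j) = M $$ (i, j) + diag_prefix_sum M i j"
proof -
  have row_i: "(\<Sum>b<Suc j. if i + j = b + i then M $$ (i, b) else 0) = M $$ (i, j)"
    by (simp add: sum.lessThan_Suc)
  have "(\<Sum>b<Suc j. if a + j = b + i then M $$ (a, b) else 0) =
      (\<Sum>b<j. if a + j = b + i then M $$ (a, b) else 0)" if "a < i" for a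
    using that by (simp add: sum.lessThan_Suc)
  then show ?thesis
    unfolding diag_prefix_sum_def by (simp add: sum.lessThan_Suc row_i)
qed

lemma diag_prefix_sum_last_row:
  assumes M: "M \<in> carrier_mat n n" and ut: "upper_triangular M"
    and tr: "mat_trace M = 0" and j: "j < n"
  shows "diag_prefix_sum M n (Suc j) = 0"
proof (cases "Suc j = n")
  case True
  then have "diag_prefix_sum M n (Suc j) = (\<Sum>a<n. \<Sum>b<n. if a = b then M $$ (a, b) else 0)"
    unfolding diag_prefix_sum_def by (intro sum.cong) auto
  also have "\<dots> = mat_trace M"
    using M by (simp add: mat_trace_def)
  finally show ?thesis using tr by simp
next
  case False
  \<comment> \<open>then the diagonal lies strictly below the main diagonal\<close>
  have "(if a + Suc j = b + n then M $$ (a, b) else 0) = 0" if "a < n" "b < Suc j" for a b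
    using False j that ut M by auto
  then show ?thesis
    unfolding diag_prefix_sum_def by simp
qed

lemma upper_triangular_commutator_shift:
  assumes M: "M \<in> carrier_mat n n" and ut: "upper_triangular M" and tr: "mat_trace M = 0"
  shows "\<exists>C \<in> carrier_mat n n. commutator (shift_mat n) C = M"
proof
  \<comment> \<open>\<open>[N, C] $$ (i, j) = C $$ (i + 1, j) - C $$ (i, j - 1)\<close>, so \<open>C\<close> telescopes along diagonals;
    trace zero and triangularity of \<open>M\<close> make the last row consistent\<close>
  define C where "C = mat n n (\<lambda>(i, j). diag_prefix_sum M i (Suc j))"
  show C: "C \<in> carrier_mat n n"
    by (simp add: C_def)
  show "commutator (shift_mat n) C = M"
  proof (rule eq_matI)
    fix i j assume "i < dim_row M" "j < dim_col M"
    with M have i: "i < n" and j: "j < n" by auto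
    have "commutator (shift_mat n) C $$ (i, j) =
        (shift_mat n * C) $$ (i, j) - (C * shift_mat n) $$ (i, j)"
      using C i j by (simp add: commutator_def)
    also have "\<dots> =
        (if Suc i < n then diag_prefix_sum M (Suc i) (Suc j) else 0) - diag_prefix_sum M i j"
      unfolding shift_mat_mult_index[OF C i j] mult_shift_mat_index[OF C i j]
      using i j by (cases j) (auto simp: C_def)
    also have "\<dots> = M $$ (i, j)"
    proof (cases "Suc i < n")
      case False
      then have "n = Suc i" using i by simp
      then show ?thesis
        using diag_prefix_sum_last_row[OF M ut tr j] False
        by (simp add: diag_prefix_sum_Suc minus_equation_iff add_eq_0_iff)
    qed (simp add: diag_prefix_sum_Suc)
    finally show "commutator (shift_mat n) C $$ (i, j) = M $$ (i, j)" .
  qed (use M C in \<open>auto simp: commutator_def\<close>)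
qed

section \<open>Upper triangular solutions of \<open>X * Y + l * Y * X = D\<close>\<close>

lemma sum_prod_upper_triangular:
  fixes X Y :: "nat \<Rightarrow> nat \<Rightarrow> 'a::comm_ring_1"
  assumes X: "\<And>a b. b < a \<Longrightarrow> X a b = 0" and Y: "\<And>a b. b < a \<Longrightarrow> Y a b = 0"
    and j: "j < n"
  shows "(\<Sum>t<n. X i t * Y t j) =
    (if i < j then X i i * Y i j + X i j * Y j j + (\<Sum>t\<in>{i<..<j}. X i t * Y t j)
     else if i = j then X i i * Y i i else 0)"
proof -
  have "(\<Sum>t<n. X i t * Y t j) = (\<Sum>t\<in>{i..j}. X i t * Y t j)"
  proof (rule sum.mono_neutral_right)
    show "\<forall>t\<in>{..<n} - {i..j}. X i t * Y t j = 0"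
      using X Y by fastforce
  qed (use j in auto)
  moreover have "{i..j} = insert i (insert j {i<..<j})" if "i < j"
    using that by auto
  ultimately show ?thesis
    by (cases "i < j") (auto simp: add.assoc not_less)
qed

text \<open>Solves \<open>(y j + l * y i) * X + (x i + l * x j) * Y = R\<close> for \<open>(X, Y)\<close>, which is the
  \<open>(i, j)\<close> entry of \<open>X * Y + l * Y * X = D\<close> once the entries closer to the diagonal are known.\<close>
definition twisted_step :: "'a::field \<Rightarrow> (nat \<Rightarrow> 'a) \<Rightarrow> (nat \<Rightarrow> 'a) \<Rightarrow> nat \<Rightarrow> nat \<Rightarrow> 'a \<Rightarrow> 'a \<times> 'a"
  where "twisted_step l x y i j R =
    (if x i + l * x j \<noteq> 0 then (0, R / (x i + l * x j)) else (R / (y j + l * y i), 0))"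

lemma twisted_step_solves:
  assumes "x i + l * x j \<noteq> 0 \<or> y j + l * y i \<noteq> 0"
  shows "(y j + l * y i) * fst (twisted_step l x y i j R) +
    (x i + l * x j) * snd (twisted_step l x y i j R) = R"
  using assms by (auto simp: twisted_step_def)

function twisted_entries ::
  "'a::field \<Rightarrow> (nat \<Rightarrow> 'a) \<Rightarrow> (nat \<Rightarrow> 'a) \<Rightarrow> 'a mat \<Rightarrow> nat \<Rightarrow> nat \<Rightarrow> 'a \<times> 'a" where
  "twisted_entries l x y D i j = (if i < j then twisted_step l x y i j (D $$ (i, j) -
      (\<Sum>k\<in>{i<..<j}. fst (twisted_entries l x y D i k) * snd (twisted_entries l x y D k j) +
        l * (snd (twisted_entries l x y D i k) * fst (twisted_entries l x y D k j))))
    else (0, 0))"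
  by pat_completeness auto
termination
  by (relation "measure (\<lambda>(l, x, y, D, i, j). j - i)") auto

declare twisted_entries.simps [simp del]

lemma twisted_entries_sum_eq:
  fixes D :: "'a::field mat" and x y :: "nat \<Rightarrow> 'a" and l :: 'a
  defines "X \<equiv> \<lambda>i j. if i = j then x i else if i < j then fst (twisted_entries l x y D i j) else 0"
    and "Y \<equiv> \<lambda>i j. if i = j then y i else if i < j then snd (twisted_entries l x y D i j) else 0"
  assumes D: "D \<in> carrier_mat n n" and ut: "upper_triangular D"
    and diag: "\<And>i. i < n \<Longrightarrow> (1 + l) * (x i * y i) = D $$ (i, i)"
    and solvable: "\<And>i j. i < j \<Longrightarrow> j < n \<Longrightarrow> x i + l * x j \<noteq> 0 \<or> y j + l * y i \<noteq> 0"
    and i: "i < n" and j: "j < n"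
  shows "(\<Sum>t<n. X i t * Y t j) + l * (\<Sum>t<n. Y i t * X t j) = D $$ (i, j)"
proof -
  let ?E = "twisted_entries l x y D"
  have X0: "X a b = 0" and Y0: "Y a b = 0" if "b < a" for a b
    using that by (simp_all add: X_def Y_def)
  note XY = sum_prod_upper_triangular[of X Y, OF X0 Y0 j, of i]
    and YX = sum_prod_upper_triangular[of Y X, OF Y0 X0 j, of i]
  show ?thesis
  proof (cases i j rule: linorder_cases)
    case less
    let ?S = "(\<Sum>t\<in>{i<..<j}. X i t * Y t j) + l * (\<Sum>t\<in>{i<..<j}. Y i t * X t j)"
    have "?S = (\<Sum>k\<in>{i<..<j}. fst (?E i k) * snd (?E k j) + l * (snd (?E i k) * fst (?E k j)))"
      unfolding sum_distrib_left sum.distrib[symmetric]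
      by (intro sum.cong refl) (auto simp: X_def Y_def)
    then have "?E i j = twisted_step l x y i j (D $$ (i, j) - ?S)"
      using less by (subst twisted_entries.simps) simp
    then have step:
      "(y j + l * y i) * fst (?E i j) + (x i + l * x j) * snd (?E i j) = D $$ (i, j) - ?S"
      using twisted_step_solves[OF solvable[OF less j]] by simp
    have "X i i = x i" "X j j = x j" "Y i i = y i" "Y j j = y j"
      "X i j = fst (?E i j)" "Y i j = snd (?E i j)"
      using less by (simp_all add: X_def Y_def)
    with XY YX less have "(\<Sum>t<n. X i t * Y t j) + l * (\<Sum>t<n. Y i t * X t j) =
        (y j + l * y i) * fst (?E i j) + (x i + l * x j) * snd (?E i j) + ?S"
      by (simp add: algebra_simps)
    with step show ?thesis
      by simp
  next
    case equal
    with XY YX diag[OF i] show ?thesis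
      by (simp add: X_def Y_def algebra_simps)
  next
    case greater
    with XY YX ut D i show ?thesis
      by (simp add: upper_triangular_def)
  qed
qed

lemma upper_triangular_twisted_factorization:
  fixes D :: "'a::field mat"
  assumes D: "D \<in> carrier_mat n n" and ut: "upper_triangular D"
    and diag: "\<And>i. i < n \<Longrightarrow> (1 + l) * (x i * y i) = D $$ (i, i)"
    and solvable: "\<And>i j. i < j \<Longrightarrow> j < n \<Longrightarrow> x i + l * x j \<noteq> 0 \<or> y j + l * y i \<noteq> 0"
  shows "\<exists>X Y. X \<in> carrier_mat n n \<and> Y \<in> carrier_mat n n \<and>
    upper_triangular X \<and> upper_triangular Y \<and> (\<forall>i<n. X $$ (i, i) = x i \<and> Y $$ (i, i) = y i) \<and>
    twisted_prod l X Y = D"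
proof (intro exI conjI allI impI)
  define X where "X = mat n n (\<lambda>(i, j).
    if i = j then x i else if i < j then fst (twisted_entries l x y D i j) else 0)"
  define Y where "Y = mat n n (\<lambda>(i, j).
    if i = j then y i else if i < j then snd (twisted_entries l x y D i j) else 0)"
  show X: "X \<in> carrier_mat n n" and Y: "Y \<in> carrier_mat n n"
    by (simp_all add: X_def Y_def)
  show "upper_triangular X" "upper_triangular Y"
    by (auto simp: X_def Y_def)
  show "X $$ (i, i) = x i" "Y $$ (i, i) = y i" if "i < n" for i
    using that by (simp_all add: X_def Y_def)
  show "twisted_prod l X Y = D"
  proof (rule eq_matI)
    fix i j assume "i < dim_row D" "j < dim_col D"
    with D have i: "i < n" and j: "j < n"
      by auto
    have "twisted_prod l X Y $$ (i, j) =
        (\<Sum>t<n. X $$ (i, t) * Y $$ (t, j)) + l * (\<Sum>t<n. Y $$ (i, t) * X $$ (t, j))"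
      using X Y i j
      by (simp add: twisted_prod_def index_mult_mat_sum[OF X Y i j] index_mult_mat_sum[OF Y X i j]
          del: index_mult_mat(1))
    also have "\<dots> = D $$ (i, j)"
      using twisted_entries_sum_eq[OF D ut diag solvable i j] i j by (simp add: X_def Y_def)
    finally show "twisted_prod l X Y $$ (i, j) = D $$ (i, j)" .
  qed (use D X Y in \<open>auto simp: twisted_prod_def\<close>)
qed

section \<open>Choice of the diagonals\<close>

lemma alg_closed_quadratic_root:
  fixes a b c :: "'a::alg_closed_field"
  assumes "a \<noteq> 0 \<or> b \<noteq> 0"
  shows "\<exists>u. a * u\<^sup>2 + b * u + c = 0"
proof -
  have "degree [:c, b, a:] > 0"
    using assms by (cases "a = 0") (auto simp: numeral_2_eq_2 intro: le_degree)
  then obtain u where "poly [:c, b, a:] u = 0"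
    using alg_closed_imp_poly_has_root by blast
  then show ?thesis
    by (auto simp: algebra_simps power2_eq_square)
qed

lemma alg_closed_quadratic_root_avoiding:
  fixes a b c p q :: "'a::alg_closed_field"
  assumes a: "a \<noteq> 0" and disc: "b\<^sup>2 - 4 * a * c \<noteq> 0" and pq: "p \<noteq> 0 \<or> q \<noteq> 0"
  shows "\<exists>u. a * u\<^sup>2 + b * u + c = 0 \<and> p * u + q \<noteq> 0"
proof -
  obtain u1 where u1: "a * u1\<^sup>2 + b * u1 + c = 0"
    using alg_closed_quadratic_root a by blast
  define r where "r = b / a"
  have b: "b = a * r"
    using a by (simp add: r_def)
  define u2 where "u2 = - r - u1"
  have "a * u2\<^sup>2 + b * u2 + c = a * u1\<^sup>2 + b * u1 + c"
    unfolding u2_def b by (simp add: algebra_simps power2_eq_square)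
  with u1 have u2: "a * u2\<^sup>2 + b * u2 + c = 0"
    by simp
  have "(a * (u1 - u2))\<^sup>2 = b\<^sup>2 + 4 * a * (a * u1\<^sup>2 + b * u1)"
    unfolding u2_def b by (simp add: algebra_simps power2_eq_square)
  also have "a * u1\<^sup>2 + b * u1 = - c"
    using u1 by (simp only: eq_neg_iff_add_eq_0)
  finally have "(a * (u1 - u2))\<^sup>2 = b\<^sup>2 - 4 * a * c"
    by simp
  with disc have "u1 \<noteq> u2"
    by auto
  have "p * u1 + q \<noteq> 0 \<or> p * u2 + q \<noteq> 0"
  proof (rule ccontr)
    assume both: "\<not> (p * u1 + q \<noteq> 0 \<or> p * u2 + q \<noteq> 0)"
    then have "p * u1 = - q" "p * u2 = - q"
      by (simp_all add: eq_neg_iff_add_eq_0)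
    then have "p * (u1 - u2) = 0"
      by (simp add: right_diff_distrib)
    with \<open>u1 \<noteq> u2\<close> have "p = 0"
      by simp
    with both pq show False
      by simp
  qed
  with u1 u2 show ?thesis by blast
qed

text \<open>Eliminating \<open>\<xi>\<close> from \<open>u + c * \<xi> + mm = 0\<close> turns \<open>1 / u + c / \<xi> = c + 1\<close> into the
  quadratic equation for \<open>u\<close>.\<close>
lemma repeated_value_weights_of_root:
  fixes c mm l u :: "'a::field"
  assumes c0: "c \<noteq> 0" and mm0: "mm \<noteq> 0"
    and Q: "(c + 1) * u\<^sup>2 + (c + 1) * (c + mm - 1) * u + - mm = 0"
    and avoid: "(c - l) * u + - l * mm \<noteq> 0"
  shows "\<exists>\<xi>. u \<noteq> 0 \<and> \<xi> \<noteq> 0 \<and> u + c * \<xi> + mm = 0 \<and> 1 / u + c / \<xi> = c + 1 \<and> u + l * \<xi> \<noteq> 0"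
proof -
  have u0: "u \<noteq> 0"
  proof
    assume "u = 0"
    with Q mm0 show False
      by simp
  qed
  have w0: "u + mm \<noteq> 0"
  proof
    assume "u + mm = 0"
    then have u: "u = - mm"
      by (simp add: eq_neg_iff_add_eq_0)
    have "(c + 1) * u\<^sup>2 + (c + 1) * (c + mm - 1) * u + - mm = - (mm * (c * c))"
      unfolding u by (simp add: algebra_simps power2_eq_square)
    with Q c0 mm0 show False
      by simp
  qed
  define \<xi> where "\<xi> = - ((u + mm) / c)"
  have c\<xi>: "c * \<xi> = - (u + mm)"
    using c0 by (simp add: \<xi>_def)
  have \<xi>0: "\<xi> \<noteq> 0"
    using c\<xi> w0 by auto
  have "(c + 1) * (u * (u + mm)) - (u + mm - c * c * u) =
      (c + 1) * u\<^sup>2 + (c + 1) * (c + mm - 1) * u + - mm"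
    by (simp add: algebra_simps power2_eq_square)
  then have key: "(c + 1) * (u * (u + mm)) = u + mm - c * c * u"
    unfolding Q by (simp only: right_minus_eq)
  have "1 / u + c / \<xi> = 1 / u - c * c / (u + mm)"
    using c0 w0 by (simp add: \<xi>_def)
  also have "\<dots> = (u + mm - c * c * u) / (u * (u + mm))"
    using u0 w0 by (simp add: field_simps)
  also have "\<dots> = c + 1"
    unfolding key[symmetric] using u0 w0 by simp
  finally have recip: "1 / u + c / \<xi> = c + 1" .
  have "c * (u + l * \<xi>) = c * u + l * (c * \<xi>)"
    by (simp add: algebra_simps)
  also have "\<dots> = (c - l) * u + - l * mm"
    unfolding c\<xi> by (simp add: algebra_simps)
  finally have "c * (u + l * \<xi>) = (c - l) * u + - l * mm" .
  with avoid have "u + l * \<xi> \<noteq> 0"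
    by auto
  moreover have "u + c * \<xi> + mm = 0"
    by (simp add: c\<xi>)
  ultimately show ?thesis
    using u0 \<xi>0 recip by blast
qed

lemma repeated_value_weights:
  fixes l :: "'a::{alg_closed_field, field_char_0}"
  assumes k: "k \<ge> 2" and m: "m \<ge> 1"
  shows "\<exists>u \<xi>. u \<noteq> 0 \<and> \<xi> \<noteq> 0 \<and> u + of_nat (k - 1) * \<xi> + of_nat m = 0 \<and>
    1 / u + of_nat (k - 1) / \<xi> = of_nat k \<and> u + l * \<xi> \<noteq> 0"
proof -
  define c :: 'a where "c = of_nat (k - 1)"
  define mm :: 'a where "mm = of_nat m"
  have kc: "of_nat k = c + 1"
    using k by (simp add: c_def of_nat_diff)
  have c0: "c \<noteq> 0" and mm0: "mm \<noteq> 0"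
    using k m by (simp_all add: c_def mm_def)
  have "c + mm - 1 = of_nat (k + m - 2)"
    using k m by (simp add: c_def mm_def of_nat_diff)
  then have "((c + 1) * (c + mm - 1))\<^sup>2 - 4 * (c + 1) * - mm =
      of_nat ((k * (k + m - 2))\<^sup>2 + 4 * k * m)"
    unfolding kc[symmetric] by (simp add: mm_def)
  also have "\<dots> \<noteq> 0"
    using k m by (simp only: of_nat_eq_0_iff) simp
  finally have disc: "((c + 1) * (c + mm - 1))\<^sup>2 - 4 * (c + 1) * - mm \<noteq> 0" .
  have "c + 1 \<noteq> 0"
    using k by (simp flip: kc)
  moreover have "c - l \<noteq> 0 \<or> - l * mm \<noteq> 0"
    using c0 mm0 by auto
  ultimately obtain u where "(c + 1) * u\<^sup>2 + (c + 1) * (c + mm - 1) * u + - mm = 0"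
    and "(c - l) * u + - l * mm \<noteq> 0"
    using alg_closed_quadratic_root_avoiding[OF _ disc] by blast
  then show ?thesis
    using repeated_value_weights_of_root[OF c0 mm0] unfolding kc c_def mm_def by blast
qed

lemma two_value_weights:
  fixes a b :: "'a::{alg_closed_field, field_char_0}"
  assumes a: "a \<noteq> 0" and b: "b \<noteq> 0" and m: "m \<ge> 1"
  shows "\<exists>u w. u \<noteq> 0 \<and> w \<noteq> 0 \<and> u + w + of_nat m = 0 \<and> a / u + b / w = a + b"
proof -
  define mm :: 'a where "mm = of_nat m"
  have mm0: "mm \<noteq> 0"
    using m by (simp add: mm_def)
  have "a + b \<noteq> 0 \<or> (a + b) * mm + b - a \<noteq> 0"
    using a by (auto simp: add_eq_0_iff)
  then obtain u where Q: "(a + b) * u\<^sup>2 + ((a + b) * mm + b - a) * u + - a * mm = 0"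
    using alg_closed_quadratic_root by blast
  have u0: "u \<noteq> 0"
    using Q a mm0 by auto
  define w where "w = - mm - u"
  have w0: "w \<noteq> 0"
  proof
    assume "w = 0"
    then have "u = - mm"
      by (simp add: w_def)
    with Q have "b * mm = 0"
      by (simp add: algebra_simps power2_eq_square)
    with b mm0 show False
      by simp
  qed
  have "a / u + b / w - (a + b) = (a * w + b * u - (a + b) * u * w) / (u * w)"
    using u0 w0 by (simp add: field_simps)
  also have "a * w + b * u - (a + b) * u * w =
      (a + b) * u\<^sup>2 + ((a + b) * mm + b - a) * u + - a * mm"
    by (simp add: w_def algebra_simps power2_eq_square)
  finally have "a / u + b / w = a + b"
    using Q by simp
  moreover have "u + w + mm = 0"
    by (simp add: w_def)
  ultimately show ?thesis
    using u0 w0 by (auto simp: mm_def)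
qed

lemma sum_lessThan_point_or_mem:
  fixes a b :: "'a::semiring_1" and n :: nat
  assumes K: "K \<subseteq> {..<n}" and p: "p \<in> K"
  shows "(\<Sum>t<n. if t = p then a else if t \<in> K then b else f t) =
    a + of_nat (card K - 1) * b + (\<Sum>t\<in>{..<n} - K. f t)"
proof -
  let ?g = "\<lambda>t. if t = p then a else if t \<in> K then b else f t"
  have fin: "finite K"
    using K by (rule finite_subset) simp
  have "(\<Sum>t<n. ?g t) = (\<Sum>t\<in>{..<n} - K. ?g t) + (\<Sum>t\<in>K. ?g t)"
    by (rule sum.subset_diff[OF K]) simp
  also have "(\<Sum>t\<in>{..<n} - K. ?g t) = (\<Sum>t\<in>{..<n} - K. f t)"
    using p by (intro sum.cong) auto
  also have "(\<Sum>t\<in>K. ?g t) = a + (\<Sum>t\<in>K - {p}. b)"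
    by (subst sum.remove[OF fin p]) (auto intro: sum.cong)
  also have "(\<Sum>t\<in>K - {p}. b) = of_nat (card K - 1) * b"
    using fin p by simp
  finally show ?thesis
    by (simp only: ac_simps)
qed

text \<open>Diagonals \<open>x\<close>, \<open>y\<close> of trace-zero triangular factors \<open>X\<close>, \<open>Y\<close> with
  \<open>X * Y + l * Y * X\<close> having diagonal \<open>(1 + l) * e\<close>. The last condition, needed to solve for the
  off-diagonal entries, only has to be imposed where \<open>e i = e j\<close>
  (\<open>diag_factorization_solvable\<close>).\<close>
definition diag_factorization :: "nat \<Rightarrow> 'a::field \<Rightarrow> (nat \<Rightarrow> 'a) \<Rightarrow> (nat \<Rightarrow> 'a) \<Rightarrow> (nat \<Rightarrow> 'a) \<Rightarrow> bool"
  where "diag_factorization n l e x y \<longleftrightarrow>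
    (\<Sum>i<n. x i) = 0 \<and> (\<Sum>i<n. y i) = 0 \<and> (\<forall>i<n. x i * y i = e i) \<and>
    (\<forall>i j. i < j \<longrightarrow> j < n \<longrightarrow> e i = e j \<longrightarrow> x i + l * x j \<noteq> 0 \<or> y j + l * y i \<noteq> 0)"

lemma diag_factorization_solvable:
  assumes fac: "diag_factorization n l e x y" and ij: "i < j" "j < n"
  shows "x i + l * x j \<noteq> 0 \<or> y j + l * y i \<noteq> 0"
proof (rule ccontr)
  assume degenerate: "\<not> ?thesis"
  then have x: "x i = - l * x j" and y: "y j = - l * y i"
    by (simp_all add: eq_neg_iff_add_eq_0)
  have "e i = x i * y i"
    using fac ij by (simp add: diag_factorization_def)
  also have "\<dots> = x j * y j"
    unfolding x y by simp
  also have "\<dots> = e j"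
    using fac ij by (simp add: diag_factorization_def)
  finally show False
    using fac ij degenerate unfolding diag_factorization_def by blast
qed

lemma diag_factorization_by_division:
  assumes x0: "\<forall>i<n. x i \<noteq> 0" and sx: "(\<Sum>i<n. x i) = 0" and sy: "(\<Sum>i<n. e i / x i) = 0"
    and pairs: "\<forall>i j. i < j \<longrightarrow> j < n \<longrightarrow> e i = e j \<longrightarrow> x i + l * x j \<noteq> 0"
  shows "diag_factorization n l e x (\<lambda>i. e i / x i)"
  using assms by (simp add: diag_factorization_def)

lemma of_nat_minus_one_square_neq_one:
  assumes "n \<ge> 3"
  shows "(of_nat n - 1) * (of_nat n - 1) \<noteq> (1::'a::field_char_0)"
proof -
  have "(of_nat n - 1 :: 'a) = of_nat (n - 1)"
    using assms by (simp add: of_nat_diff)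
  moreover have "(n - 1) * (n - 1) \<noteq> 1"
    using assms by (simp add: mult_eq_1_iff)
  ultimately show ?thesis
    by (metis of_nat_1 of_nat_eq_iff of_nat_mult)
qed

lemma diag_factorization_of_zero_at:
  fixes e :: "nat \<Rightarrow> 'a::field_char_0"
  assumes n: "n \<ge> 3" and l: "l \<noteq> -1" and tr: "(\<Sum>i<n. e i) = 0"
    and p: "p < n" "e p = 0"
    and after: "\<And>j. p < j \<Longrightarrow> j < n \<Longrightarrow> e j = 0 \<Longrightarrow> l * (of_nat n - 1) = 1"
    and before: "\<And>i. i < p \<Longrightarrow> e i = 0 \<Longrightarrow> l * (of_nat n - 1) \<noteq> 1"
  shows "\<exists>x. diag_factorization n l e x e"
proof -
  define x :: "nat \<Rightarrow> 'a" where "x t = (if t = p then 1 - of_nat n else 1)" for t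
  have "(\<Sum>t<n. x t) = (\<Sum>t<n. 1 - (if t = p then of_nat n else 0))"
    by (intro sum.cong) (auto simp: x_def)
  also have "\<dots> = 0"
    using p by (simp add: sum_subtractf sum.delta)
  finally have sx: "(\<Sum>t<n. x t) = 0" .
  have "x i + l * x j \<noteq> 0" if ij: "i < j" "j < n" and eij: "e i = e j" for i j
  proof -
    consider "i = p" | "j = p" | "i \<noteq> p" "j \<noteq> p"
      by blast
    then show ?thesis
    proof cases
      case 1
      then have lc: "l * (of_nat n - 1) = 1"
        using after ij eij p by simp
      have "1 - of_nat n + l \<noteq> 0"
      proof
        assume "1 - of_nat n + l = 0"
        then have "l = - (1 - of_nat n)"
          by (simp only: add_eq_0_iff)
        with lc have "(of_nat n - 1) * (of_nat n - 1) = (1::'a)"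
          by simp
        with of_nat_minus_one_square_neq_one[OF n] show False
          by blast
      qed
      then show ?thesis
        using 1 ij by (simp add: x_def)
    next
      case 2
      then have "l * (of_nat n - 1) \<noteq> 1"
        using before ij eij p by simp
      then show ?thesis
        using 2 ij by (simp add: x_def algebra_simps)
    next
      case 3
      then show ?thesis
        using l by (simp add: x_def add_eq_0_iff)
    qed
  qed
  then have "diag_factorization n l e x e"
    using sx tr p by (auto simp: diag_factorization_def x_def)
  then show ?thesis
    by blast
qed

lemma diag_factorization_of_zero_entry:
  fixes e :: "nat \<Rightarrow> 'a::field_char_0"
  assumes n: "n \<ge> 3" and l: "l \<noteq> -1" and tr: "(\<Sum>i<n. e i) = 0"
    and z: "z < n" "e z = 0"
  shows "\<exists>x. diag_factorization n l e x e"
proof -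
  define Z where "Z = {t. t < n \<and> e t = 0}"
  have fin: "finite Z" and "z \<in> Z"
    using z by (auto simp: Z_def)
  define p where "p = (if l * (of_nat n - 1) = 1 then Min Z else Max Z)"
  have "p \<in> Z"
    unfolding p_def using fin \<open>z \<in> Z\<close> by (auto intro!: Min_in Max_in)
  then have p: "p < n" "e p = 0"
    by (auto simp: Z_def)
  show ?thesis
  proof (rule diag_factorization_of_zero_at[OF n l tr p])
    fix j assume "p < j" "j < n" "e j = 0"
    then have "j \<in> Z"
      by (simp add: Z_def)
    with fin \<open>p < j\<close> have "p \<noteq> Max Z"
      using Max_ge[OF fin] by fastforce
    then show "l * (of_nat n - 1) = 1"
      by (auto simp: p_def split: if_splits)
  next
    fix i assume "i < p" "e i = 0"
    then have "i \<in> Z"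
      using p by (simp add: Z_def)
    with fin \<open>i < p\<close> have "p \<noteq> Min Z"
      using Min_le[OF fin] by fastforce
    then show "l * (of_nat n - 1) \<noteq> 1"
      by (auto simp: p_def split: if_splits)
  qed
qed

lemma diag_factorization_of_distinct:
  fixes e :: "nat \<Rightarrow> 'a::{alg_closed_field, field_char_0}"
  assumes n: "n \<ge> 3" and tr: "(\<Sum>i<n. e i) = 0" and nz: "\<forall>i<n. e i \<noteq> 0"
    and distinct: "\<forall>i j. i < j \<longrightarrow> j < n \<longrightarrow> e i \<noteq> e j"
  shows "\<exists>x y. diag_factorization n l e x y"
proof -
  define m where "m = n - 2"
  have nm: "n = Suc (Suc m)" and m: "m \<ge> 1"
    using n by (simp_all add: m_def)
  obtain u w where u: "u \<noteq> 0" and w: "w \<noteq> 0" and sx: "u + w + of_nat m = 0"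
    and sy: "e 0 / u + e 1 / w = e 0 + e 1"
    using two_value_weights[OF _ _ m, of "e 0" "e 1"] nz nm by auto
  define x where "x t = (if t = 0 then u else if t = 1 then w else 1)" for t :: nat
  have "(e 0 + e 1) + (\<Sum>t<m. e (Suc (Suc t))) = 0"
    using tr unfolding nm sum.lessThan_Suc_shift by (simp add: add.assoc)
  then have rest: "(\<Sum>t<m. e (Suc (Suc t))) = - (e 0 + e 1)"
    by (simp only: add_eq_0_iff)
  have "diag_factorization n l e x (\<lambda>i. e i / x i)"
  proof (rule diag_factorization_by_division)
    show "\<forall>i<n. x i \<noteq> 0"
      using u w by (simp add: x_def)
    show "(\<Sum>i<n. x i) = 0"
      unfolding nm sum.lessThan_Suc_shift using sx by (simp add: x_def add.assoc)
    show "(\<Sum>i<n. e i / x i) = 0"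
      unfolding nm sum.lessThan_Suc_shift using sy rest by (simp add: x_def add.assoc[symmetric])
    show "\<forall>i j. i < j \<longrightarrow> j < n \<longrightarrow> e i = e j \<longrightarrow> x i + l * x j \<noteq> 0"
      using distinct by blast
  qed
  then show ?thesis by blast
qed

lemma diag_factorization_of_level_set:
  fixes e :: "nat \<Rightarrow> 'a::field"
  assumes l: "l \<noteq> -1" and K: "K = {t. t < n \<and> e t = v}" and pK: "p \<in> K" and p_min: "\<forall>t\<in>K. p \<le> t"
    and rest: "(\<Sum>t\<in>{..<n} - K. e t) = - (of_nat (card K) * v)"
    and u: "u \<noteq> 0" and \<xi>: "\<xi> \<noteq> 0"
    and sx: "u + of_nat (card K - 1) * \<xi> + of_nat (card ({..<n} - K)) = 0"
    and sy: "1 / u + of_nat (card K - 1) / \<xi> = of_nat (card K)" and avoid: "u + l * \<xi> \<noteq> 0"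
  shows "\<exists>x y. diag_factorization n l e x y"
proof -
  have Kn: "K \<subseteq> {..<n}"
    using K by auto
  define x where "x t = (if t = p then u else if t \<in> K then \<xi> else 1)" for t
  have "diag_factorization n l e x (\<lambda>i. e i / x i)"
  proof (rule diag_factorization_by_division)
    show "\<forall>i<n. x i \<noteq> 0"
      using u \<xi> by (simp add: x_def)
    show "(\<Sum>i<n. x i) = 0"
      unfolding x_def sum_lessThan_point_or_mem[OF Kn pK] using sx by simp
    have "(\<Sum>i<n. e i / x i) = (\<Sum>t<n. if t = p then v / u else if t \<in> K then v / \<xi> else e t)"
      using pK K by (intro sum.cong) (auto simp: x_def)
    also have "\<dots> = v * (1 / u + of_nat (card K - 1) / \<xi> - of_nat (card K))"
      unfolding sum_lessThan_point_or_mem[OF Kn pK] rest by (simp add: algebra_simps)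
    finally show "(\<Sum>i<n. e i / x i) = 0"
      using sy by simp
    show "\<forall>i j. i < j \<longrightarrow> j < n \<longrightarrow> e i = e j \<longrightarrow> x i + l * x j \<noteq> 0"
    proof (intro allI impI)
      fix i j assume ij: "i < j" "j < n" and eij: "e i = e j"
      have l1: "1 + l \<noteq> 0"
        using l by (simp add: add_eq_0_iff)
      show "x i + l * x j \<noteq> 0"
      proof (cases "i \<in> K")
        case True
        then have "p \<le> i"
          using p_min by blast
        then have "j \<noteq> p"
          using ij by simp
        moreover have "j \<in> K"
          using True ij eij K by simp
        moreover have "\<xi> + l * \<xi> = (1 + l) * \<xi>"
          by (simp add: algebra_simps)
        ultimately show ?thesis
          using True avoid \<xi> l1 by (auto simp: x_def)
      next
        case False
        then have "j \<notin> K" "i \<noteq> p" "j \<noteq> p"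
          using ij eij pK K by auto
        then show ?thesis
          using False l1 by (simp add: x_def)
      qed
    qed
  qed
  then show ?thesis
    by blast
qed

lemma diag_factorization_of_repeated:
  fixes e :: "nat \<Rightarrow> 'a::{alg_closed_field, field_char_0}"
  assumes l: "l \<noteq> -1" and tr: "(\<Sum>i<n. e i) = 0" and nz: "\<forall>i<n. e i \<noteq> 0"
    and rep: "i1 < j1" "j1 < n" "e i1 = e j1"
  shows "\<exists>x y. diag_factorization n l e x y"
proof -
  define v where "v = e i1"
  define K where "K = {t. t < n \<and> e t = v}"
  have Kn: "K \<subseteq> {..<n}" and i1j1: "{i1, j1} \<subseteq> K"
    using rep by (auto simp: K_def v_def)
  have fin: "finite K"
    using Kn by (rule finite_subset) simp
  have k: "card K \<ge> 2"
    using card_mono[OF fin i1j1] rep by simp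
  have pK: "Min K \<in> K"
    using fin i1j1 by (auto intro!: Min_in)
  have v: "v \<noteq> 0"
    using nz rep by (simp add: v_def)
  have "(\<Sum>t<n. e t) = (\<Sum>t<n. if t = Min K then v else if t \<in> K then v else e t)"
    using pK by (intro sum.cong) (auto simp: K_def)
  with tr have rest: "(\<Sum>t\<in>{..<n} - K. e t) = - (of_nat (card K) * v)"
    unfolding sum_lessThan_point_or_mem[OF Kn pK] using k
    by (simp add: eq_neg_iff_add_eq_0 of_nat_diff algebra_simps)
  have "{..<n} - K \<noteq> {}"
  proof
    assume "{..<n} - K = {}"
    with rest have "of_nat (card K) * v = 0"
      by simp
    with k v show False
      by simp
  qed
  then have m: "card ({..<n} - K) \<ge> 1"
    by (simp add: Suc_le_eq card_gt_0_iff)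
  obtain u \<xi> where "u \<noteq> 0" "\<xi> \<noteq> 0"
    "u + of_nat (card K - 1) * \<xi> + of_nat (card ({..<n} - K)) = 0"
    "1 / u + of_nat (card K - 1) / \<xi> = of_nat (card K)" "u + l * \<xi> \<noteq> 0"
    using repeated_value_weights[OF k m, of l] by blast
  with fin show ?thesis
    by (intro diag_factorization_of_level_set[OF l K_def pK _ rest]) auto
qed

lemma diag_factorization_exists:
  fixes e :: "nat \<Rightarrow> 'a::{alg_closed_field, field_char_0}"
  assumes n: "n \<ge> 3" and l: "l \<noteq> -1" and tr: "(\<Sum>i<n. e i) = 0"
  shows "\<exists>x y. diag_factorization n l e x y"
proof (cases "\<exists>z<n. e z = 0")
  case True
  then show ?thesis
    using diag_factorization_of_zero_entry[OF n l tr] by blast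
next
  case False
  then have nz: "\<forall>i<n. e i \<noteq> 0"
    by auto
  show ?thesis
  proof (cases "\<exists>i j. i < j \<and> j < n \<and> e i = e j")
    case True
    then show ?thesis
      using diag_factorization_of_repeated[OF l tr nz] by blast
  next
    case False
    then show ?thesis
      using diag_factorization_of_distinct[OF n tr nz] by blast
  qed
qed

lemma upper_triangular_twisted_commutators:
  fixes U :: "'a::{alg_closed_field, field_char_0} mat"
  assumes n: "n \<ge> 3" and l: "l \<noteq> -1" and U: "U \<in> carrier_mat n n"
    and ut: "upper_triangular U" and tr: "mat_trace U = 0"
  shows "\<exists>B C. B \<in> carrier_mat n n \<and> C \<in> carrier_mat n n \<and>
    U = twisted_prod l (commutator (shift_mat n) B) (commutator (shift_mat n) C)"
proof -
  have l1: "1 + l \<noteq> 0"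
    using l by (metis add.commute add_eq_0_iff)
  define e where "e i = U $$ (i, i) / (1 + l)" for i
  have "(\<Sum>i<n. e i) = 0"
    using tr U by (simp add: e_def mat_trace_def flip: sum_divide_distrib)
  then obtain x y where fac: "diag_factorization n l e x y"
    using diag_factorization_exists[OF n l] by blast
  have diag: "(1 + l) * (x i * y i) = U $$ (i, i)" if "i < n" for i
    using fac that l1 by (simp add: diag_factorization_def e_def)
  obtain X Y where X: "X \<in> carrier_mat n n" and Y: "Y \<in> carrier_mat n n"
    and utX: "upper_triangular X" and utY: "upper_triangular Y"
    and diagXY: "\<forall>i<n. X $$ (i, i) = x i \<and> Y $$ (i, i) = y i" and XY: "twisted_prod l X Y = U"
    using upper_triangular_twisted_factorization[OF U ut diag diag_factorization_solvable[OF fac]]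
    by blast
  have "mat_trace X = 0" "mat_trace Y = 0"
    using fac diagXY X Y by (simp_all add: mat_trace_def diag_factorization_def)
  then obtain B C where "B \<in> carrier_mat n n" "commutator (shift_mat n) B = X"
    and "C \<in> carrier_mat n n" "commutator (shift_mat n) C = Y"
    using upper_triangular_commutator_shift[OF X utX] upper_triangular_commutator_shift[OF Y utY]
    by blast
  with XY show ?thesis
    by blast
qed

theorem lemma4p6:
  fixes D :: "'a::{alg_closed_field, field_char_0} mat"
    and n :: nat and l :: 'a
  assumes "n \<ge> 3"
    and "l \<noteq> -1"
    and "D \<in> carrier_mat n n"
    and "mat_trace D = 0"
  shows "\<exists>A B C. A \<in> carrier_mat n n \<and> B \<in> carrier_mat n n \<and> C \<in> carrier_mat n n \<and>
           D = commutator A B * commutator A C + l \<cdot>\<^sub>m (commutator A C * commutator A B)"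
proof -
  obtain U P Q where sim: "similar_mat_wit D U P Q" and ut: "upper_triangular U"
    using alg_closed_triangularizable[OF assms(3)] by blast
  from similar_mat_witD2[OF assms(3) sim]
  have P: "P \<in> carrier_mat n n" and Q: "Q \<in> carrier_mat n n" and QP: "Q * P = 1\<^sub>m n"
    and U: "U \<in> carrier_mat n n" and DU: "D = P * U * Q"
    by auto
  have "mat_trace U = 0"
    using similar_mat_wit_mat_trace[OF assms(3) sim] assms(4) by simp
  then obtain B C where B: "B \<in> carrier_mat n n" and C: "C \<in> carrier_mat n n"
    and UBC: "U = twisted_prod l (commutator (shift_mat n) B) (commutator (shift_mat n) C)"
    using upper_triangular_twisted_commutators[OF assms(1,2) U ut] by blast
  let ?A = "P * shift_mat n * Q"
  have "D = twisted_prod l (commutator ?A (P * B * Q)) (commutator ?A (P * C * Q))"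
    unfolding DU UBC commutator_conj[OF P Q QP shift_mat_carrier B]
      commutator_conj[OF P Q QP shift_mat_carrier C]
    by (rule twisted_prod_conj[OF P Q QP, symmetric]) (simp_all add: commutator_carrier B C)
  moreover have "?A \<in> carrier_mat n n" "P * B * Q \<in> carrier_mat n n" "P * C * Q \<in> carrier_mat n n"
    using P Q B C by auto
  ultimately show ?thesis
    unfolding twisted_prod_def by blast
qed

end
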